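(* Consider the problem of minimizing $g(\mathbf{x})+f(\mathbf{x})+h(\mathbf{y})$ subject to $\mathbf{A}\mathbf{x}+\mathbf{B}\mathbf{y}=\mathbf{0}$ (the coupling function $g$ depends only on $\mathbf{x}$), under the standing assumptions (i)–(iv) below, and let $\{(\mathbf{x}^k,\mathbf{y}^k,\boldsymbol{\gamma}^k)\}$ be generated by the two-block linearized ADMM below with parameters satisfying $$L_x\ge L_g+\beta L_{\mathbf{A}}+6L_w^2+1,\quad L_y\ge L_w+L_w^2+3,\quad C_m=\tfrac{L_y+L_w^2}{2},\quad \beta\ge\max\left\{\frac{L_w+L_y+2}{\lambda_{\mathbf{B}^{\rm T}\mathbf{B}}},\frac{3(L_w^2+L_y^2)}{\lambda_{\mathbf{B}^{\rm T}\mathbf{B}}C_m},\frac{3L_y^2}{\lambda_{\mathbf{B}^{\rm T}\mathbf{B}}}\right\},$$ where $L_{\mathbf{A}}$ is the largest eigenvalue of $\mathbf{A}^{\rm T}\mathbf{A}$, $\lambda_{\mathbf{B}^{\rm T}\mathbf{B}}$ the smallest eigenvalue of $\mathbf{B}^{\rm T}\mathbf{B}$, $L_w=L_g+L_h$. Then the sequence $\{g(\mathbf{x}^k)+f(\mathbf{x}^k)+h(\mathbf{y}^k)\}$ is convergent.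
   Context: Variables $\mathbf{x}\in\mathbb{R}^p$, $\mathbf{y}\in\mathbb{R}^q$; $\mathbf{A}\in\mathbb{R}^{n\times p}$, $\mathbf{B}\in\mathbb{R}^{n\times q}$; $f$ possibly nonconvex nonsmooth. A function is $L$-Lipschitz differentiable if its gradient is $L$-Lipschitz. Standing assumptions: (i) $h$ is $L_h$-Lipschitz differentiable; (ii) $g$ is $L_g$-Lipschitz differentiable; (iii) $g(\mathbf{x})+f(\mathbf{x})+h(\mathbf{y})$ is lower bounded on the feasible set $\{(\mathbf{x},\mathbf{y}):\mathbf{A}\mathbf{x}+\mathbf{B}\mathbf{y}=\mathbf{0}\}$ and coercive with respect to $\mathbf{y}$ over it (objective $\to+\infty$ along any feasible sequence with $\|\mathbf{y}^k\|\to\infty$); (iv) $\mathbf{B}$ has full column rank and $\mathrm{Im}(\mathbf{A})\subset\mathrm{Im}(\mathbf{B})$. Algorithm (parameters $L_x,L_y,\beta>0$, arbitrary initialization): $\mathbf{x}^{k+1}\in\arg\min\bar f^k$, $\mathbf{y}^{k+1}=\arg\min\bar h^k$, $\boldsymbol{\gamma}^{k+1}=\boldsymbol{\gamma}^k+\beta(\mathbf{A}\mathbf{x}^{k+1}+\mathbf{B}\mathbf{y}^{k+1})$, with $\bar f^k(\mathbf{x})=f(\mathbf{x})+\langle\boldsymbol{\gamma}^k,\mathbf{A}\mathbf{x}\rangle+\frac{L_x}{2}\|\mathbf{x}-\mathbf{x}^k\|^2+\langle\mathbf{x}-\mathbf{x}^k,\nabla g(\mathbf{x}^k)+\beta\mathbf{A}^{\rm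 T}(\mathbf{A}\mathbf{x}^k+\mathbf{B}\mathbf{y}^k)\rangle$, $\bar h^k(\mathbf{y})=\langle\boldsymbol{\gamma}^k,\mathbf{B}\mathbf{y}\rangle+\frac{L_y}{2}\|\mathbf{y}-\mathbf{y}^k\|^2+\frac{\beta}{2}\|\mathbf{A}\mathbf{x}^{k+1}+\mathbf{B}\mathbf{y}\|^2+\langle\mathbf{y}-\mathbf{y}^k,\nabla h(\mathbf{y}^k)\rangle$ (minimizers of $\bar f^k$ assumed to exist). *)

theory Defs
  imports "HOL-Analysis.Analysis"
begin

definition mat_eigenvalues :: "real^'n^'n \<Rightarrow> real set" where
  "mat_eigenvalues M = {c. \<exists>v. v \<noteq> 0 \<and> M *v v = c *\<^sub>R v}"

text \<open>Largest / smallest eigenvalue (used for symmetric matrices, where the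
  eigenvalue set is finite and nonempty).\<close>
definition max_eigenvalue :: "real^'n^'n \<Rightarrow> real" where
  "max_eigenvalue M = Max (mat_eigenvalues M)"

definition min_eigenvalue :: "real^'n^'n \<Rightarrow> real" where
  "min_eigenvalue M = Min (mat_eigenvalues M)"

end

theory Submission
  imports Defs
begin

text \<open>The augmented Lagrangian \<open>L\<^sub>k = F(x\<^sub>k, y\<^sub>k) + \<gamma>\<^sub>k \<bullet> r\<^sub>k + \<beta>/2 |r\<^sub>k|\<^sup>2\<close>,
  \<open>r\<^sub>k = A x\<^sub>k + B y\<^sub>k\<close>, decreases along an iteration except for the term \<open>\<beta> |r\<^sub>k\<^sub>+\<^sub>1|\<^sup>2\<close>
  produced by the dual ascent step. The optimality condition of the \<open>y\<close>-update reads
  \<open>B\<^sup>T \<gamma>\<^sub>k\<^sub>+\<^sub>1 = - (\<nabla>h(y\<^sub>k) + L\<^sub>y (y\<^sub>k\<^sub>+\<^sub>1 - y\<^sub>k))\<close>, so, \<open>B\<close> having full column rank,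
  \<open>\<beta> |r\<^sub>k\<^sub>+\<^sub>2|\<close> is controlled by the last two \<open>y\<close>-steps; adding a multiple of
  \<open>|y\<^sub>k\<^sub>+\<^sub>1 - y\<^sub>k|\<^sup>2\<close> to \<open>L\<^sub>k\<^sub>+\<^sub>1\<close> gives a potential that decreases by
  \<open>|y\<^sub>k\<^sub>+\<^sub>2 - y\<^sub>k\<^sub>+\<^sub>1|\<^sup>2 / 20\<close>. Since \<open>Im A \<subseteq> Im B\<close>, \<open>r\<^sub>k = B z\<^sub>k\<close>, and the potential
  dominates the objective at the feasible point \<open>(x\<^sub>k, y\<^sub>k - z\<^sub>k)\<close>; this bounds it from below
  and, by coercivity, keeps \<open>y\<^sub>k\<close> bounded. So the potential converges, the \<open>y\<close>-steps, the
  residuals and \<open>\<gamma>\<^sub>k \<bullet> r\<^sub>k\<close> tend to zero, and the objective converges to the same limit.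
  Of the parameter conditions only \<open>L\<^sub>x \<ge> L\<^sub>g + \<beta> L\<^sub>A\<close>, \<open>L\<^sub>y \<ge> L\<^sub>h + L\<^sub>h\<^sup>2 + 3\<close> and
  \<open>\<beta> \<lambda>\<^sub>B \<ge> 3 L\<^sub>y\<^sup>2\<close> are needed.\<close>

(* Keep products \<open>transpose B *v v\<close> in this form instead of \<open>v v* B\<close>. *)
declare transpose_matrix_vector[simp del] vector_transpose_matrix[simp del]

lemma power2_norm_add: "(norm (a + b :: 'a::real_inner))\<^sup>2 = (norm a)\<^sup>2 + 2 * (a \<bullet> b) + (norm b)\<^sup>2"
  by (simp add: power2_norm_eq_inner inner_add_left inner_add_right inner_commute)

lemma power2_norm_diff: "(norm (a - b :: 'a::real_inner))\<^sup>2 = (norm a)\<^sup>2 - 2 * (a \<bullet> b) + (norm b)\<^sup>2"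
  by (simp add: power2_norm_eq_inner inner_diff_left inner_diff_right inner_commute)

lemma inner_matrix_vector_transpose: "((A::real^'m^'n) *v u) \<bullet> w = u \<bullet> (transpose A *v w)"
  by (metis dot_lmul_matrix inner_commute transpose_matrix_vector)

lemma linear_coeff_eq_0_if_quadratic_nonneg:
  fixes a b :: real
  assumes "\<And>t. 0 \<le> t * a + t\<^sup>2 * b"
  shows "a = 0"
proof (rule ccontr)
  assume "a \<noteq> 0"
  define c where "c = \<bar>b\<bar> + 1"
  have c: "c > 0" "b \<le> c - 1" unfolding c_def by auto
  have "0 \<le> (-a/c) * a + (-a/c)\<^sup>2 * b" using assms .
  also have "\<dots> \<le> (-a/c) * a + (-a/c)\<^sup>2 * (c - 1)"
    using c by (intro add_left_mono mult_left_mono) auto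
  also have "\<dots> = - a\<^sup>2 / c\<^sup>2"
    using c by (simp add: field_simps power2_eq_square)
  also have "\<dots> < 0" using \<open>a \<noteq> 0\<close> c by simp
  finally show False by simp
qed

section \<open>Extreme eigenvalues of symmetric matrices\<close>

lemma inner_symmetric_matrix:
  fixes M :: "real^'n^'n"
  assumes "transpose M = M"
  shows "(M *v u) \<bullet> w = u \<bullet> (M *v w)"
  using inner_matrix_vector_transpose[of M u w] assms by simp

lemma finite_mat_eigenvalues_symmetric:
  fixes M :: "real^'n^'n"
  assumes symM: "transpose M = M"
  shows "finite (mat_eigenvalues M)"
proof -
  define E where "E = mat_eigenvalues M"
  define ev where "ev c = (SOME u. u \<noteq> 0 \<and> M *v u = c *\<^sub>R u)" for c
  have ev: "ev c \<noteq> 0 \<and> M *v ev c = c *\<^sub>R ev c" if "c \<in> E" for c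
    using that unfolding E_def mat_eigenvalues_def ev_def by (metis (mono_tags, lifting) someI_ex mem_Collect_eq)
  have orth: "ev c \<bullet> ev d = 0" if "c \<in> E" "d \<in> E" "c \<noteq> d" for c d
  proof -
    have "c * (ev c \<bullet> ev d) = (M *v ev c) \<bullet> ev d" using ev[OF that(1)] by simp
    also have "\<dots> = ev c \<bullet> (M *v ev d)" by (rule inner_symmetric_matrix[OF symM])
    also have "\<dots> = d * (ev c \<bullet> ev d)" using ev[OF that(2)] by simp
    finally show ?thesis using that(3) by simp
  qed
  have "inj_on ev E"
    by (rule inj_onI) (metis ev orth inner_eq_zero_iff)
  moreover have "independent (ev ` E)"
  proof (rule pairwise_orthogonal_independent)
    show "pairwise orthogonal (ev ` E)"
      unfolding pairwise_def orthogonal_def using orth by (metis imageE)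
    show "0 \<notin> ev ` E" using ev by auto
  qed
  ultimately show ?thesis
    using finiteI_independent finite_image_iff E_def by blast
qed

lemma rayleigh_quotient_attains_min:
  fixes M :: "real^'n^'n"
  obtains v where "norm v = 1" "\<And>u. (v \<bullet> (M *v v)) * (norm u)\<^sup>2 \<le> u \<bullet> (M *v u)"
proof -
  have cont: "continuous_on (sphere 0 1) (\<lambda>u::real^'n. u \<bullet> (M *v u))"
    by (intro continuous_intros linear_continuous_on) (auto simp: matrix_vector_mul_linear)
  obtain v where v: "v \<in> sphere 0 1"
    and vmin: "\<And>u. u \<in> sphere 0 1 \<Longrightarrow> v \<bullet> (M *v v) \<le> u \<bullet> (M *v u)"
    using continuous_attains_inf[OF compact_sphere _ cont] by (auto simp: sphere_eq_empty)
  have "(v \<bullet> (M *v v)) * (norm u)\<^sup>2 \<le> u \<bullet> (M *v u)" for u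
  proof (cases "u = 0")
    case False
    then have "v \<bullet> (M *v v) \<le> (u /\<^sub>R norm u) \<bullet> (M *v (u /\<^sub>R norm u))"
      by (intro vmin) simp
    also have "\<dots> = (u \<bullet> (M *v u)) / (norm u)\<^sup>2"
      by (simp add: matrix_vector_mult_scaleR power2_eq_square divide_inverse)
    finally show ?thesis using False by (simp add: field_simps)
  qed simp
  with v that show ?thesis by simp
qed

lemma rayleigh_minimizer_eigenvector:
  fixes M :: "real^'n^'n"
  assumes symM: "transpose M = M"
    and ray: "\<And>u. m * (norm u)\<^sup>2 \<le> u \<bullet> (M *v u)"
    and v: "v \<bullet> (M *v v) = m * (norm v)\<^sup>2"
  shows "M *v v = m *\<^sub>R v"
proof -
  define w where "w = M *v v - m *\<^sub>R v"
  have "w \<bullet> (M *v v) - m * (v \<bullet> w) = w \<bullet> (M *v v - m *\<^sub>R v)"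
    by (simp add: inner_diff_right inner_commute)
  then have wv: "w \<bullet> (M *v v) = w \<bullet> w + m * (v \<bullet> w)"
    by (simp add: w_def[symmetric])
  have vw: "v \<bullet> (M *v w) = w \<bullet> (M *v v)"
    using inner_symmetric_matrix[OF symM, of w v] by (simp add: inner_commute)
  \<comment> \<open>the nonnegative form \<open>u \<bullet> M u - m |u|\<^sup>2\<close> vanishes at \<open>v\<close>, so its derivative there in direction \<open>w\<close> does too\<close>
  have "0 \<le> t * (2 * (w \<bullet> w)) + t\<^sup>2 * (w \<bullet> (M *v w) - m * (norm w)\<^sup>2)" for t
  proof -
    have quad: "(v + t *\<^sub>R w) \<bullet> (M *v (v + t *\<^sub>R w))
        = v \<bullet> (M *v v) + 2 * t * (w \<bullet> (M *v v)) + t\<^sup>2 * (w \<bullet> (M *v w))"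
      using vw by (simp add: matrix_vector_right_distrib matrix_vector_mult_scaleR inner_add_left
          inner_add_right power2_eq_square algebra_simps)
    have norm: "(norm (v + t *\<^sub>R w))\<^sup>2 = (norm v)\<^sup>2 + 2 * t * (v \<bullet> w) + t\<^sup>2 * (norm w)\<^sup>2"
      by (simp add: power2_norm_add power_mult_distrib)
    have "0 \<le> (v + t *\<^sub>R w) \<bullet> (M *v (v + t *\<^sub>R w)) - m * (norm (v + t *\<^sub>R w))\<^sup>2"
      using ray[of "v + t *\<^sub>R w"] by simp
    also have "\<dots> = t * (2 * (w \<bullet> w)) + t\<^sup>2 * (w \<bullet> (M *v w) - m * (norm w)\<^sup>2)"
      unfolding quad norm wv v by (simp add: algebra_simps)
    finally show ?thesis .
  qed
  then have "w = 0"
    using linear_coeff_eq_0_if_quadratic_nonneg by fastforce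
  then show ?thesis unfolding w_def by simp
qed

lemma
  fixes M :: "real^'n^'n"
  assumes symM: "transpose M = M"
  shows min_eigenvalue_symmetric_mem: "min_eigenvalue M \<in> mat_eigenvalues M"
    and min_eigenvalue_symmetric_le: "min_eigenvalue M * (norm u)\<^sup>2 \<le> u \<bullet> (M *v u)"
proof -
  obtain v where v: "norm v = 1" and ray: "\<And>u. (v \<bullet> (M *v v)) * (norm u)\<^sup>2 \<le> u \<bullet> (M *v u)"
    using rayleigh_quotient_attains_min[of M] by blast
  define m where "m = v \<bullet> (M *v v)"
  have "M *v v = m *\<^sub>R v"
    using rayleigh_minimizer_eigenvector[OF symM] ray v unfolding m_def by simp
  then have m: "m \<in> mat_eigenvalues M"
    using v unfolding mat_eigenvalues_def by (auto intro!: exI[of _ v])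
  have "m \<le> c" if "c \<in> mat_eigenvalues M" for c
  proof -
    from that obtain u where u: "u \<noteq> 0" "M *v u = c *\<^sub>R u" unfolding mat_eigenvalues_def by auto
    then have "m * (norm u)\<^sup>2 \<le> c * (norm u)\<^sup>2"
      using ray[of u] unfolding m_def by (simp add: power2_norm_eq_inner)
    then show ?thesis using u(1) by simp
  qed
  then have "min_eigenvalue M = m"
    unfolding min_eigenvalue_def using finite_mat_eigenvalues_symmetric[OF symM] m
    by (intro Min_eqI) auto
  then show "min_eigenvalue M \<in> mat_eigenvalues M" "min_eigenvalue M * (norm u)\<^sup>2 \<le> u \<bullet> (M *v u)"
    using m ray unfolding m_def by auto
qed

lemma max_eigenvalue_symmetric_ge:
  fixes M :: "real^'n^'n"
  assumes symM: "transpose M = M"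
  shows "u \<bullet> (M *v u) \<le> max_eigenvalue M * (norm u)\<^sup>2"
proof -
  have neg: "(- M) *v v = - (M *v v)" for v
    by (simp add: vec_eq_iff matrix_vector_mult_def sum_negf)
  have sym_neg: "transpose (- M) = - M"
    using symM by (simp add: vec_eq_iff transpose_def)
  have "c \<in> mat_eigenvalues M \<longleftrightarrow> - c \<in> mat_eigenvalues (- M)" for c
    unfolding mat_eigenvalues_def neg by simp
  then have eig: "mat_eigenvalues M = uminus ` mat_eigenvalues (- M)"
    by (force simp: image_iff)
  have "max_eigenvalue M = - min_eigenvalue (- M)"
    unfolding max_eigenvalue_def eig
  proof (rule Max_eqI)
    show "finite (uminus ` mat_eigenvalues (- M))"
      using finite_mat_eigenvalues_symmetric[OF sym_neg] by simp
    show "- min_eigenvalue (- M) \<in> uminus ` mat_eigenvalues (- M)"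
      using min_eigenvalue_symmetric_mem[OF sym_neg] by simp
  next
    fix c assume "c \<in> uminus ` mat_eigenvalues (- M)"
    then show "c \<le> - min_eigenvalue (- M)"
      using finite_mat_eigenvalues_symmetric[OF sym_neg] by (auto simp: min_eigenvalue_def)
  qed
  with min_eigenvalue_symmetric_le[OF sym_neg, of u] show ?thesis
    unfolding neg by simp
qed

lemma symmetric_gram_matrix: "transpose (transpose B ** B) = transpose (B::real^'m^'n) ** B"
  by (simp add: matrix_transpose_mul)

lemma inner_gram_matrix: "u \<bullet> ((transpose B ** B) *v u) = (norm ((B::real^'m^'n) *v u))\<^sup>2"
  by (simp add: matrix_vector_mul_assoc[symmetric] power2_norm_eq_inner inner_matrix_vector_transpose)

lemma norm_le_max_eigenvalue_gram: "(norm ((A::real^'m^'n) *v u))\<^sup>2 \<le> max_eigenvalue (transpose A ** A) * (norm u)\<^sup>2"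
  using max_eigenvalue_symmetric_ge[OF symmetric_gram_matrix] by (metis inner_gram_matrix)

lemma min_eigenvalue_gram_le: "min_eigenvalue (transpose B ** B) * (norm u)\<^sup>2 \<le> (norm ((B::real^'m^'n) *v u))\<^sup>2"
  using min_eigenvalue_symmetric_le[OF symmetric_gram_matrix] by (metis inner_gram_matrix)

lemma min_eigenvalue_gram_pos:
  fixes B :: "real^'m^'n"
  assumes "rank B = CARD('m)"
  shows "min_eigenvalue (transpose B ** B) > 0"
proof -
  define M where "M = transpose B ** B"
  obtain v where v: "v \<noteq> 0" "M *v v = min_eigenvalue M *\<^sub>R v"
    using min_eigenvalue_symmetric_mem[OF symmetric_gram_matrix] unfolding M_def mat_eigenvalues_def by auto
  have "B *v v \<noteq> 0"
    using full_rank_injective[of B] assms v(1) by (metis injD matrix_vector_mult_0_right)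
  moreover have "(norm (B *v v))\<^sup>2 = min_eigenvalue M * (norm v)\<^sup>2"
    using inner_gram_matrix[of v B] v(2) unfolding M_def by (simp add: power2_norm_eq_inner)
  ultimately have "0 < min_eigenvalue M * (norm v)\<^sup>2" by (metis zero_less_norm_iff zero_less_power)
  then show ?thesis using v(1) unfolding M_def by (simp add: zero_less_mult_iff)
qed

lemma min_eigenvalue_mul_quadratic_le:
  fixes M :: "real^'n^'n"
  assumes symM: "transpose M = M" and nonneg: "min_eigenvalue M \<ge> 0"
  shows "min_eigenvalue M * (u \<bullet> (M *v u)) \<le> (norm (M *v u))\<^sup>2"
proof -
  define lam where "lam = min_eigenvalue M"
  define z where "z = M *v u"
  have "(norm (z - lam *\<^sub>R u))\<^sup>2 = (norm z)\<^sup>2 - 2 * lam * (u \<bullet> z) + lam\<^sup>2 * (norm u)\<^sup>2"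
    by (simp add: power2_norm_diff inner_commute power_mult_distrib)
  then have "(norm z)\<^sup>2 - lam * (u \<bullet> z) = lam * (u \<bullet> z - lam * (norm u)\<^sup>2) + (norm (z - lam *\<^sub>R u))\<^sup>2"
    by (simp add: algebra_simps power2_eq_square)
  moreover have "0 \<le> lam * (u \<bullet> z - lam * (norm u)\<^sup>2)"
    using min_eigenvalue_symmetric_le[OF symM, of u] nonneg unfolding lam_def z_def by simp
  ultimately show ?thesis unfolding lam_def z_def by (smt (verit) zero_le_power2)
qed

lemma min_eigenvalue_gram_le_transpose:
  fixes B :: "real^'m^'n"
  assumes "rank B = CARD('m)"
  shows "min_eigenvalue (transpose B ** B) * (norm (B *v u))\<^sup>2 \<le> (norm (transpose B *v (B *v u)))\<^sup>2"
  using min_eigenvalue_mul_quadratic_le[OF symmetric_gram_matrix, of B u] min_eigenvalue_gram_pos[OF assms]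
  by (simp add: inner_gram_matrix matrix_vector_mul_assoc)

section \<open>Analytic and scalar inequalities\<close>

lemma lipschitz_gradient_upper_bound:
  fixes h :: "'a::real_inner \<Rightarrow> real"
  assumes grad: "\<And>v. (h has_derivative (\<lambda>d. G v \<bullet> d)) (at v)"
    and lip: "L-lipschitz_on UNIV G"
  shows "h y \<le> h x + G x \<bullet> (y - x) + L/2 * (norm (y - x))\<^sup>2"
proof -
  define d where "d = y - x"
  define \<phi> where "\<phi> t = h (x + t *\<^sub>R d) - t * (G x \<bullet> d) - L/2 * t\<^sup>2 * (norm d)\<^sup>2" for t
  have "((\<lambda>t. h (x + t *\<^sub>R d)) has_derivative (\<lambda>s. G (x + t *\<^sub>R d) \<bullet> (s *\<^sub>R d))) (at t)" for t
    by (rule has_derivative_compose[OF _ grad]) (auto intro!: derivative_eq_intros)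
  then have "((\<lambda>t. h (x + t *\<^sub>R d)) has_real_derivative (G (x + t *\<^sub>R d) \<bullet> d)) (at t)" for t
    by (simp add: has_field_derivative_def mult_commute_abs)
  then have \<phi>': "(\<phi> has_real_derivative (G (x + t *\<^sub>R d) \<bullet> d - G x \<bullet> d - L/2 * (2 * t) * (norm d)\<^sup>2)) (at t)" for t
    unfolding \<phi>_def by (auto intro!: derivative_eq_intros)
  have "\<phi> 1 \<le> \<phi> 0"
  proof (rule DERIV_nonpos_imp_nonincreasing[of 0 1])
    fix t :: real assume t: "0 \<le> t" "t \<le> 1"
    have "(G (x + t *\<^sub>R d) - G x) \<bullet> d \<le> norm (G (x + t *\<^sub>R d) - G x) * norm d"
      by (rule norm_cauchy_schwarz)
    also have "\<dots> \<le> (L * norm (t *\<^sub>R d)) * norm d"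
      using lipschitz_onD[OF lip, of "x + t *\<^sub>R d" x] by (intro mult_right_mono) (auto simp: dist_norm)
    also have "\<dots> = L * t * (norm d)\<^sup>2" using t by (simp add: power2_eq_square)
    finally have "G (x + t *\<^sub>R d) \<bullet> d - G x \<bullet> d - L/2 * (2 * t) * (norm d)\<^sup>2 \<le> 0"
      by (simp add: inner_diff_left)
    with \<phi>' show "\<exists>y. (\<phi> has_real_derivative y) (at t) \<and> y \<le> 0" by blast
  qed simp
  then show ?thesis unfolding \<phi>_def d_def by (simp add: algebra_simps)
qed

lemma mult_le_weighted_squares:
  fixes a b s E D :: real
  assumes "a > 0" "s\<^sup>2 \<le> 4 * a * b"
  shows "s * E * D \<le> a * E\<^sup>2 + b * D\<^sup>2"
proof -
  have "0 \<le> (2*a*E - s*D)\<^sup>2" by simp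
  also have "\<dots> = 4*a\<^sup>2*E\<^sup>2 - 4*a*(s*E*D) + s\<^sup>2*D\<^sup>2" by (simp add: power2_eq_square algebra_simps)
  also have "\<dots> \<le> 4*a\<^sup>2*E\<^sup>2 - 4*a*(s*E*D) + 4*a*b*D\<^sup>2"
    using assms(2) by (intro add_left_mono mult_right_mono) auto
  also have "\<dots> = 4*a*(a * E\<^sup>2 + b * D\<^sup>2 - s*E*D)" by (simp add: power2_eq_square algebra_simps)
  finally show ?thesis using assms(1) by (simp add: zero_le_mult_iff)
qed

lemma power2_weighted_sum_le:
  fixes p q X Y :: real
  assumes "p \<ge> 0" "q \<ge> 0"
  shows "(p * X + q * Y)\<^sup>2 \<le> (p + q) * (p * X\<^sup>2 + q * Y\<^sup>2)"
proof -
  have "(p + q) * (p * X\<^sup>2 + q * Y\<^sup>2) - (p * X + q * Y)\<^sup>2 = p * q * (X - Y)\<^sup>2"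
    by (simp add: power2_eq_square algebra_simps)
  then show ?thesis using assms by (smt (verit) mult_nonneg_nonneg zero_le_power2)
qed

lemma tendsto_zero_if_power2_norm_le:
  fixes a :: "nat \<Rightarrow> 'a::real_normed_vector"
  assumes "\<And>k. (norm (a k))\<^sup>2 \<le> b k" and "b \<longlonglongrightarrow> 0"
  shows "a \<longlonglongrightarrow> 0"
proof (rule Lim_null_comparison)
  show "\<forall>\<^sub>F k in sequentially. norm (a k) \<le> sqrt (b k)"
    using assms(1) by (intro always_eventually allI real_le_rsqrt)
  show "(\<lambda>k. sqrt (b k)) \<longlonglongrightarrow> 0"
    using tendsto_real_sqrt[OF assms(2)] by simp
qed

lemma parameter_margin:
  fixes p q K :: real
  assumes q: "q \<ge> 0" and p: "p \<ge> q + q\<^sup>2 + 3" and K: "K \<ge> 3 * p\<^sup>2"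
  shows "(p - q)/2 - (2*p + q)\<^sup>2 / K \<ge> 1/20"
proof -
  have p3: "p \<ge> 3" using p q zero_le_power2[of q] by linarith
  then have K0: "K > 0" using K by (smt (verit) zero_less_power)
  have q1: "4*p*q \<le> 4/3 * p\<^sup>2 * q" using p3 q by (simp add: power2_eq_square mult_right_mono)
  have q2: "9 * q\<^sup>2 \<le> p\<^sup>2 * q\<^sup>2"
    using p3 by (intro mult_right_mono) (auto simp: power2_eq_square intro: mult_mono[of 3 p 3 p, simplified])
  have poly: "(25/18) * q\<^sup>2 - (4/3) * q + 7/20 \<ge> 0"
  proof -
    have "(25/18) * q\<^sup>2 - (4/3) * q + 7/20 = (25/18) * (q - 12/25)\<^sup>2 + 7/20 - 8/25"
      by (simp add: power2_eq_square algebra_simps)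
    then show ?thesis using zero_le_power2[of "q - 12/25"] by linarith
  qed
  have "(2*p + q)\<^sup>2 = 4*p\<^sup>2 + 4*p*q + q\<^sup>2" by (simp add: power2_eq_square algebra_simps)
  also have "\<dots> \<le> p\<^sup>2 * (4 + 4/3*q + q\<^sup>2/9)" using q1 q2 by (simp add: algebra_simps)
  also have "\<dots> \<le> p\<^sup>2 * (3 * ((q\<^sup>2 + 3)/2 - 1/20))"
    using poly by (intro mult_left_mono) (simp_all add: algebra_simps)
  also have "\<dots> = 3 * p\<^sup>2 * ((q\<^sup>2 + 3)/2 - 1/20)" by simp
  also have "\<dots> \<le> 3 * p\<^sup>2 * ((p - q)/2 - 1/20)"
    using p by (intro mult_left_mono) auto
  also have "\<dots> \<le> K * ((p - q)/2 - 1/20)"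
  proof (rule mult_right_mono[OF K])
    have "3 \<le> p - q" using p zero_le_power2[of q] by linarith
    then show "0 \<le> (p - q)/2 - 1/20" by simp
  qed
  finally have "(2*p + q)\<^sup>2 / K \<le> (p - q)/2 - 1/20" using K0 by (simp add: divide_le_eq mult.commute)
  then show ?thesis by linarith
qed

section \<open>The linearized ADMM iteration\<close>

locale linearized_admm =
  fixes f g :: "real^'p \<Rightarrow> real"
    and h :: "real^'q \<Rightarrow> real"
    and gradg :: "real^'p \<Rightarrow> real^'p"
    and gradh :: "real^'q \<Rightarrow> real^'q"
    and A :: "real^'p^'n" and B :: "real^'q^'n"
    and Lg Lh Lx Ly \<beta> :: real
    and x :: "nat \<Rightarrow> real^'p" and y :: "nat \<Rightarrow> real^'q" and \<gamma> :: "nat \<Rightarrow> real^'n"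
  assumes h_grad: "\<And>v. (h has_derivative (\<lambda>d. gradh v \<bullet> d)) (at v)"
    and h_lip: "Lh-lipschitz_on UNIV gradh"
    and g_grad: "\<And>u. (g has_derivative (\<lambda>d. gradg u \<bullet> d)) (at u)"
    and g_lip: "Lg-lipschitz_on UNIV gradg"
    and lower_bdd: "\<exists>c. \<forall>u v. A *v u + B *v v = 0 \<longrightarrow> c \<le> g u + f u + h v"
    and coercive: "\<And>X Y. (\<forall>k. A *v X k + B *v Y k = 0) \<Longrightarrow>
                     filterlim (\<lambda>k. norm (Y k)) at_top sequentially \<Longrightarrow>
                     filterlim (\<lambda>k. g (X k) + f (X k) + h (Y k)) at_top sequentially"
    and B_rank: "rank B = CARD('q)"
    and im_AB: "range (\<lambda>u. A *v u) \<subseteq> range (\<lambda>v. B *v v)"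
    and \<beta>_pos: "\<beta> > 0"
    and x_step: "\<And>k u.
        f (x (Suc k)) + \<gamma> k \<bullet> (A *v x (Suc k)) + Lx / 2 * (norm (x (Suc k) - x k))\<^sup>2
          + (x (Suc k) - x k) \<bullet> (gradg (x k) + \<beta> *\<^sub>R (transpose A *v (A *v x k + B *v y k)))
        \<le> f u + \<gamma> k \<bullet> (A *v u) + Lx / 2 * (norm (u - x k))\<^sup>2
          + (u - x k) \<bullet> (gradg (x k) + \<beta> *\<^sub>R (transpose A *v (A *v x k + B *v y k)))"
    and y_step: "\<And>k v.
        \<gamma> k \<bullet> (B *v y (Suc k)) + Ly / 2 * (norm (y (Suc k) - y k))\<^sup>2
          + \<beta> / 2 * (norm (A *v x (Suc k) + B *v y (Suc k)))\<^sup>2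
          + (y (Suc k) - y k) \<bullet> gradh (y k)
        \<le> \<gamma> k \<bullet> (B *v v) + Ly / 2 * (norm (v - y k))\<^sup>2
          + \<beta> / 2 * (norm (A *v x (Suc k) + B *v v))\<^sup>2
          + (v - y k) \<bullet> gradh (y k)"
    and \<gamma>_step: "\<And>k. \<gamma> (Suc k) = \<gamma> k + \<beta> *\<^sub>R (A *v x (Suc k) + B *v y (Suc k))"
    and Lx_ge: "Lx \<ge> Lg + \<beta> * max_eigenvalue (transpose A ** A)"
    and Ly_ge: "Ly \<ge> Lh + Lh\<^sup>2 + 3"
    and \<beta>_ge: "\<beta> * min_eigenvalue (transpose B ** B) \<ge> 3 * Ly\<^sup>2"
begin

definition residual :: "nat \<Rightarrow> real^'n" where
  "residual k = A *v x k + B *v y k"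

definition objective :: "nat \<Rightarrow> real" where
  "objective k = g (x k) + f (x k) + h (y k)"

definition lagrangian :: "nat \<Rightarrow> real" where
  "lagrangian k = objective k + \<gamma> k \<bullet> residual k + \<beta>/2 * (norm (residual k))\<^sup>2"

definition dy :: "nat \<Rightarrow> real^'q" where
  "dy k = y (Suc k) - y k"

definition lamB :: real where
  "lamB = min_eigenvalue (transpose B ** B)"

text \<open>Chosen so that the bound on \<open>\<beta> |residual (k + 2)|\<^sup>2\<close> in terms of \<open>dy (k + 1)\<close> and
  \<open>dy k\<close> telescopes: its coefficient of \<open>|dy k|\<^sup>2\<close> is exactly \<open>dy_weight\<close>.\<close>
definition dy_weight :: real where
  "dy_weight = (Ly + Lh) * (2 * Ly + Lh) / (\<beta> * lamB)"

definition potential :: "nat \<Rightarrow> real" where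
  "potential k = lagrangian (Suc k) + dy_weight * (norm (dy k))\<^sup>2"

text \<open>Well defined because \<open>Im A \<subseteq> Im B\<close>.\<close>
definition xB :: "nat \<Rightarrow> real^'q" where
  "xB k = (SOME w. B *v w = A *v x k)"

lemma Lh_nonneg: "Lh \<ge> 0"
  using h_lip lipschitz_on_nonneg by blast

lemma Ly_ge_3: "Ly \<ge> 3"
  using Ly_ge Lh_nonneg zero_le_power2[of Lh] by linarith

lemma lamB_pos: "lamB > 0"
  unfolding lamB_def by (rule min_eigenvalue_gram_pos[OF B_rank])

lemma penalty_ge: "\<beta> * lamB \<ge> 3 * Ly\<^sup>2"
  using \<beta>_ge unfolding lamB_def .

lemma penalty_pos: "\<beta> * lamB > 0"
  using \<beta>_pos lamB_pos by simp

lemma gradh_dist_le: "norm (gradh a - gradh b) \<le> Lh * norm (a - b)"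
  using lipschitz_onD[OF h_lip, of a b] by (simp add: dist_norm)

lemma B_xB: "B *v xB k = A *v x k"
proof -
  have "A *v x k \<in> range (\<lambda>v. B *v v)" using im_AB by blast
  then have "\<exists>w. B *v w = A *v x k" by (metis imageE)
  then show ?thesis unfolding xB_def by (rule someI_ex)
qed

lemma residual_eq: "residual k = B *v (xB k + y k)"
  by (simp add: residual_def B_xB matrix_vector_right_distrib)

lemma multiplier_step: "\<gamma> (Suc k) = \<gamma> k + \<beta> *\<^sub>R residual (Suc k)"
  using \<gamma>_step unfolding residual_def .

text \<open>First-order optimality of the \<open>y\<close>-update, rewritten with the new multiplier.\<close>
lemma multiplier_eq: "transpose B *v \<gamma> (Suc k) = - (gradh (y k) + Ly *\<^sub>R dy k)"
proof -
  define r where "r = residual (Suc k)"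
  define G where "G = transpose B *v \<gamma> (Suc k) + Ly *\<^sub>R dy k + gradh (y k)"
  have GG: "G \<bullet> G = \<gamma> k \<bullet> (B *v G) + \<beta> * (r \<bullet> (B *v G)) + Ly * (dy k \<bullet> G) + G \<bullet> gradh (y k)"
  proof -
    have "G \<bullet> G = (transpose B *v \<gamma> (Suc k) + Ly *\<^sub>R dy k + gradh (y k)) \<bullet> G"
      by (subst (1) G_def) (rule refl)
    then have "G \<bullet> G = (transpose B *v \<gamma> (Suc k)) \<bullet> G + Ly * (dy k \<bullet> G) + G \<bullet> gradh (y k)"
      by (simp add: inner_add_left inner_add_right inner_commute)
    moreover have "(transpose B *v \<gamma> (Suc k)) \<bullet> G = (B *v G) \<bullet> \<gamma> (Suc k)"
      using inner_matrix_vector_transpose[of B G "\<gamma> (Suc k)"] by (simp add: inner_commute)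
    moreover have "(B *v G) \<bullet> \<gamma> (Suc k) = \<gamma> k \<bullet> (B *v G) + \<beta> * (r \<bullet> (B *v G))"
      by (simp add: r_def multiplier_step inner_add_right inner_commute)
    ultimately show ?thesis by simp
  qed
  have "0 \<le> t * (G \<bullet> G) + t\<^sup>2 * (Ly/2 * (norm G)\<^sup>2 + \<beta>/2 * (norm (B *v G))\<^sup>2)" for t
  proof -
    have r: "A *v x (Suc k) + B *v (y (Suc k) + t *\<^sub>R G) = r + t *\<^sub>R (B *v G)"
      by (simp add: r_def residual_def matrix_vector_right_distrib matrix_vector_mult_scaleR)
    have d: "y (Suc k) + t *\<^sub>R G - y k = dy k + t *\<^sub>R G"
      by (simp add: dy_def)
    show ?thesis
      using y_step[of k "y (Suc k) + t *\<^sub>R G"]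
      unfolding r d GG dy_def[symmetric] residual_def[symmetric] r_def[symmetric]
      by (simp add: power2_norm_add power_mult_distrib matrix_vector_right_distrib
          matrix_vector_mult_scaleR inner_add_left inner_add_right inner_commute algebra_simps)
  qed
  then have "G = 0"
    using linear_coeff_eq_0_if_quadratic_nonneg by fastforce
  then show ?thesis
    unfolding G_def by (simp add: algebra_simps eq_neg_iff_add_eq_0)
qed

lemma x_update_decrease:
  "g (x (Suc k)) + f (x (Suc k)) + \<gamma> k \<bullet> (A *v x (Suc k)) + \<beta>/2 * (norm (A *v x (Suc k) + B *v y k))\<^sup>2
   \<le> g (x k) + f (x k) + \<gamma> k \<bullet> (A *v x k) + \<beta>/2 * (norm (residual k))\<^sup>2"
proof -
  define LA where "LA = max_eigenvalue (transpose A ** A)"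
  define d where "d = x (Suc k) - x k"
  define s where "s = d \<bullet> (transpose A *v residual k)"
  have "A *v x (Suc k) + B *v y k = residual k + A *v d"
    by (simp add: residual_def d_def matrix_vector_mult_diff_distrib)
  then have "(norm (A *v x (Suc k) + B *v y k))\<^sup>2 = (norm (residual k))\<^sup>2 + 2 * s + (norm (A *v d))\<^sup>2"
    using inner_matrix_vector_transpose[of A d "residual k"]
    by (simp add: power2_norm_add s_def inner_commute)
  moreover have "\<beta>/2 * (norm (A *v d))\<^sup>2 \<le> \<beta>/2 * (LA * (norm d)\<^sup>2)"
    unfolding LA_def using \<beta>_pos by (intro mult_left_mono norm_le_max_eigenvalue_gram) auto
  moreover have "f (x (Suc k)) + \<gamma> k \<bullet> (A *v x (Suc k)) + Lx/2 * (norm d)\<^sup>2 + gradg (x k) \<bullet> d + \<beta> * s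
      \<le> f (x k) + \<gamma> k \<bullet> (A *v x k)"
    using x_step[of k "x k"] by (simp add: d_def s_def residual_def inner_add_right inner_commute)
  moreover have "g (x (Suc k)) \<le> g (x k) + gradg (x k) \<bullet> d + Lg/2 * (norm d)\<^sup>2"
    unfolding d_def by (rule lipschitz_gradient_upper_bound[OF g_grad g_lip])
  moreover have "Lg/2 * (norm d)\<^sup>2 + \<beta>/2 * (LA * (norm d)\<^sup>2) \<le> Lx/2 * (norm d)\<^sup>2"
    using Lx_ge mult_right_mono[OF Lx_ge zero_le_power2[of "norm d"]]
    unfolding LA_def by (simp add: algebra_simps)
  ultimately show ?thesis
    by (simp add: algebra_simps)
qed

lemma y_update_decrease:
  "h (y (Suc k)) + \<gamma> k \<bullet> (B *v y (Suc k)) + \<beta>/2 * (norm (residual (Suc k)))\<^sup>2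
   \<le> h (y k) + \<gamma> k \<bullet> (B *v y k) + \<beta>/2 * (norm (A *v x (Suc k) + B *v y k))\<^sup>2
      - (Ly - Lh)/2 * (norm (dy k))\<^sup>2"
proof -
  have "h (y (Suc k)) \<le> h (y k) + gradh (y k) \<bullet> dy k + Lh/2 * (norm (dy k))\<^sup>2"
    unfolding dy_def by (rule lipschitz_gradient_upper_bound[OF h_grad h_lip])
  moreover have "\<gamma> k \<bullet> (B *v y (Suc k)) + Ly/2 * (norm (dy k))\<^sup>2 + \<beta>/2 * (norm (residual (Suc k)))\<^sup>2
      + dy k \<bullet> gradh (y k) \<le> \<gamma> k \<bullet> (B *v y k) + \<beta>/2 * (norm (A *v x (Suc k) + B *v y k))\<^sup>2"
    using y_step[of k "y k"] by (simp add: dy_def residual_def)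
  ultimately show ?thesis
    by (simp add: inner_commute left_diff_distrib diff_divide_distrib)
qed

lemma lagrangian_decrease:
  "lagrangian (Suc k) \<le> lagrangian k - (Ly - Lh)/2 * (norm (dy k))\<^sup>2 + \<beta> * (norm (residual (Suc k)))\<^sup>2"
proof -
  have step: "\<gamma> (Suc k) \<bullet> residual (Suc k) = \<gamma> k \<bullet> residual (Suc k) + \<beta> * (norm (residual (Suc k)))\<^sup>2"
    by (simp add: multiplier_step inner_add_left power2_norm_eq_inner)
  have split: "\<gamma> k \<bullet> residual j = \<gamma> k \<bullet> (A *v x j) + \<gamma> k \<bullet> (B *v y j)" for j
    by (simp add: residual_def inner_add_right)
  show ?thesis
    using step split[of k] split[of "Suc k"] x_update_decrease[of k] y_update_decrease[of k]
    unfolding lagrangian_def objective_def by linarith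
qed

lemma dy_weight_mult: "dy_weight * (\<beta> * lamB) = (Ly + Lh) * (2 * Ly + Lh)"
  using \<beta>_pos lamB_pos unfolding dy_weight_def by simp

lemma dy_weight_pos: "dy_weight > 0"
  unfolding dy_weight_def using penalty_pos Ly_ge_3 Lh_nonneg by simp

lemma residual_bound:
  "lamB * \<beta>\<^sup>2 * (norm (residual (Suc (Suc k))))\<^sup>2 \<le> (Ly * norm (dy (Suc k)) + (Ly + Lh) * norm (dy k))\<^sup>2"
proof -
  define z where "z = \<beta> *\<^sub>R (xB (Suc (Suc k)) + y (Suc (Suc k)))"
  have Bz: "B *v z = \<beta> *\<^sub>R residual (Suc (Suc k))"
    by (simp add: z_def residual_eq matrix_vector_mult_scaleR)
  have "transpose B *v (B *v z) = transpose B *v \<gamma> (Suc (Suc k)) - transpose B *v \<gamma> (Suc k)"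
    by (simp add: Bz multiplier_step[of "Suc k"] matrix_vector_right_distrib)
  also have "\<dots> = (gradh (y k) - gradh (y (Suc k))) - Ly *\<^sub>R dy (Suc k) + Ly *\<^sub>R dy k"
    by (simp add: multiplier_eq algebra_simps)
  moreover have "norm (u - v + w) \<le> norm u + norm v + norm w" for u v w :: "real^'q"
    using norm_triangle_ineq[of "u - v" w] norm_triangle_ineq4[of u v] by linarith
  moreover have "norm (gradh (y k) - gradh (y (Suc k))) \<le> Lh * norm (dy k)"
    using gradh_dist_le[of "y k" "y (Suc k)"] by (simp add: dy_def norm_minus_commute)
  moreover have "norm (Ly *\<^sub>R v) = Ly * norm v" for v :: "real^'q"
    using Ly_ge_3 by simp
  ultimately have "norm (transpose B *v (B *v z)) \<le> Lh * norm (dy k) + Ly * norm (dy (Suc k)) + Ly * norm (dy k)"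
    by (smt (verit))
  then have "(norm (transpose B *v (B *v z)))\<^sup>2 \<le> (Ly * norm (dy (Suc k)) + (Ly + Lh) * norm (dy k))\<^sup>2"
    by (intro power_mono) (auto simp: algebra_simps)
  moreover have "lamB * (norm (B *v z))\<^sup>2 \<le> (norm (transpose B *v (B *v z)))\<^sup>2"
    unfolding lamB_def by (rule min_eigenvalue_gram_le_transpose[OF B_rank])
  moreover have "(norm (B *v z))\<^sup>2 = \<beta>\<^sup>2 * (norm (residual (Suc (Suc k))))\<^sup>2"
    using \<beta>_pos by (simp add: Bz power_mult_distrib)
  ultimately show ?thesis by (simp add: mult.assoc)
qed

lemma residual_telescoping_bound:
  "\<beta> * (norm (residual (Suc (Suc k))))\<^sup>2
   \<le> (2 * Ly + Lh)\<^sup>2 / (\<beta> * lamB) * (norm (dy (Suc k)))\<^sup>2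
      - dy_weight * (norm (dy (Suc k)))\<^sup>2 + dy_weight * (norm (dy k))\<^sup>2"
proof -
  define K where "K = \<beta> * lamB"
  have "K * (\<beta> * (norm (residual (Suc (Suc k))))\<^sup>2) = lamB * \<beta>\<^sup>2 * (norm (residual (Suc (Suc k))))\<^sup>2"
    unfolding K_def by (simp add: power2_eq_square)
  also have "\<dots> \<le> (Ly * norm (dy (Suc k)) + (Ly + Lh) * norm (dy k))\<^sup>2"
    by (rule residual_bound)
  also have "\<dots> \<le> (2 * Ly + Lh) * (Ly * (norm (dy (Suc k)))\<^sup>2 + (Ly + Lh) * (norm (dy k))\<^sup>2)"
    using power2_weighted_sum_le[of Ly "Ly + Lh"] Ly_ge_3 Lh_nonneg by simp
  finally have "\<beta> * (norm (residual (Suc (Suc k))))\<^sup>2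
      \<le> (2 * Ly + Lh) * (Ly * (norm (dy (Suc k)))\<^sup>2 + (Ly + Lh) * (norm (dy k))\<^sup>2) / K"
    using penalty_pos unfolding K_def by (simp add: pos_le_divide_eq mult.commute)
  also have "\<dots> = (2 * Ly + Lh)\<^sup>2 / K * (norm (dy (Suc k)))\<^sup>2
      - dy_weight * (norm (dy (Suc k)))\<^sup>2 + dy_weight * (norm (dy k))\<^sup>2"
    unfolding dy_weight_def K_def using \<beta>_pos lamB_pos by (simp add: field_simps power2_eq_square)
  finally show ?thesis unfolding K_def .
qed

lemma potential_decrease: "(norm (dy (Suc k)))\<^sup>2 \<le> 20 * (potential k - potential (Suc k))"
proof -
  define n where "n = (norm (dy (Suc k)))\<^sup>2"
  define m where "m = (Ly - Lh)/2 - (2 * Ly + Lh)\<^sup>2 / (\<beta> * lamB)"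
  have "m * n = (Ly - Lh)/2 * n - (2 * Ly + Lh)\<^sup>2 / (\<beta> * lamB) * n"
    unfolding m_def by (simp add: algebra_simps)
  then have dec: "potential (Suc k) \<le> potential k - m * n"
    using lagrangian_decrease[of "Suc k"] residual_telescoping_bound[of k]
    unfolding potential_def n_def by linarith
  have "1/20 \<le> m"
    unfolding m_def using parameter_margin[OF Lh_nonneg Ly_ge penalty_ge] .
  then have "n \<le> 20 * (m * n)"
    using mult_right_mono[of 1 "20 * m" n] unfolding n_def by simp
  also have "\<dots> \<le> 20 * (potential k - potential (Suc k))"
    using dec by simp
  finally show ?thesis unfolding n_def .
qed

lemma penalty_ge_twice_Lh: "2 * Lh \<le> \<beta> * lamB"
proof -
  have "3 * Ly \<le> Ly * Ly" using Ly_ge_3 by (intro mult_right_mono) auto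
  then show ?thesis
    using penalty_ge Ly_ge Ly_ge_3 Lh_nonneg zero_le_square[of Lh]
    unfolding power2_eq_square by linarith
qed

lemma mult_le_dy_weight_squares: "(Lh + Ly) * a * b \<le> dy_weight * a\<^sup>2 + \<beta> * lamB / 4 * b\<^sup>2"
proof (rule mult_le_weighted_squares[OF dy_weight_pos])
  show "(Lh + Ly)\<^sup>2 \<le> 4 * dy_weight * (\<beta> * lamB / 4)"
    using dy_weight_mult Ly_ge_3 Lh_nonneg
    by (simp add: power2_eq_square algebra_simps mult_left_mono)
qed

lemma h_perturbation_bound:
  "h (y (Suc k) - z) \<le> h (y (Suc k)) + \<gamma> (Suc k) \<bullet> (B *v z) + \<beta>/2 * (norm (B *v z))\<^sup>2
     + dy_weight * (norm (dy k))\<^sup>2"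
proof -
  define E where "E = norm (dy k)"
  define D where "D = norm z"
  have "\<gamma> (Suc k) \<bullet> (B *v z) = z \<bullet> (transpose B *v \<gamma> (Suc k))"
    using inner_matrix_vector_transpose[of B z "\<gamma> (Suc k)"] by (simp add: inner_commute)
  then have \<gamma>Bz: "\<gamma> (Suc k) \<bullet> (B *v z) = - (z \<bullet> gradh (y k)) - Ly * (z \<bullet> dy k)"
    by (simp add: multiplier_eq inner_diff_right)
  have "h (y (Suc k) - z) \<le> h (y (Suc k)) - z \<bullet> gradh (y (Suc k)) + Lh/2 * D\<^sup>2"
    using lipschitz_gradient_upper_bound[OF h_grad h_lip, of "y (Suc k) - z" "y (Suc k)"]
    by (simp add: D_def inner_commute)
  moreover have "z \<bullet> gradh (y k) - z \<bullet> gradh (y (Suc k)) \<le> Lh * E * D"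
  proof -
    have "norm (gradh (y k) - gradh (y (Suc k))) \<le> Lh * E"
      using gradh_dist_le[of "y k" "y (Suc k)"] by (simp add: E_def dy_def norm_minus_commute)
    then have "z \<bullet> (gradh (y k) - gradh (y (Suc k))) \<le> D * (Lh * E)"
      using norm_cauchy_schwarz[of z "gradh (y k) - gradh (y (Suc k))"]
        mult_left_mono[of _ "Lh * E" D] unfolding D_def by fastforce
    then show ?thesis by (simp add: inner_diff_right algebra_simps)
  qed
  moreover have "Ly * (z \<bullet> dy k) \<le> Ly * E * D"
    using norm_cauchy_schwarz[of z "dy k"] Ly_ge_3 unfolding E_def D_def
    by (simp add: mult.assoc mult.commute mult_left_mono)
  moreover have "(Lh + Ly) * E * D = Lh * E * D + Ly * E * D"
    by (simp add: algebra_simps)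
  moreover note mult_le_dy_weight_squares[of E D]
  moreover have "Lh/2 * D\<^sup>2 + \<beta> * lamB / 4 * D\<^sup>2 \<le> \<beta>/2 * (norm (B *v z))\<^sup>2"
  proof -
    have "(Lh/2 + \<beta> * lamB / 4) * D\<^sup>2 \<le> (\<beta> * lamB / 2) * D\<^sup>2"
      using penalty_ge_twice_Lh by (intro mult_right_mono) auto
    also have "\<dots> \<le> \<beta>/2 * (norm (B *v z))\<^sup>2"
      using min_eigenvalue_gram_le[of B z] \<beta>_pos unfolding D_def lamB_def by simp
    finally show ?thesis by (simp add: algebra_simps)
  qed
  ultimately show ?thesis
    unfolding \<gamma>Bz E_def[symmetric] by linarith
qed

lemma feasible_xB: "A *v x k + B *v (- xB k) = 0"
  using linear_neg[OF matrix_vector_mul_linear, of B "xB k"] by (simp add: B_xB)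

lemma potential_lower_bound: "g (x (Suc k)) + f (x (Suc k)) + h (- xB (Suc k)) \<le> potential k"
  using h_perturbation_bound[of k "xB (Suc k) + y (Suc k)"]
  by (simp add: potential_def lagrangian_def objective_def residual_eq)

lemma potential_decseq: "decseq potential"
proof (rule decseq_SucI)
  show "potential (Suc k) \<le> potential k" for k
    using order_trans[OF zero_le_power2 potential_decrease[of k]] by simp
qed

lemma potential_tendsto: obtains L where "potential \<longlonglongrightarrow> L"
proof -
  obtain c where "\<And>u v. A *v u + B *v v = 0 \<Longrightarrow> c \<le> g u + f u + h v"
    using lower_bdd by blast
  then have "c \<le> potential k" for k
    using feasible_xB[of "Suc k"] potential_lower_bound[of k] by (meson order_trans)
  then show ?thesis
    using decseq_convergent[OF potential_decseq] that by blast
qed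

lemma dy_tendsto_zero: "dy \<longlonglongrightarrow> 0"
proof -
  obtain L where L: "potential \<longlonglongrightarrow> L" by (rule potential_tendsto)
  have "(\<lambda>k. potential k - potential (Suc k)) \<longlonglongrightarrow> 0"
    using tendsto_diff[OF L LIMSEQ_Suc[OF L]] by simp
  then have "(\<lambda>k. 20 * (potential k - potential (Suc k))) \<longlonglongrightarrow> 0"
    by (rule tendsto_mult_right_zero)
  then have "(\<lambda>k. dy (Suc k)) \<longlonglongrightarrow> 0"
    by (rule tendsto_zero_if_power2_norm_le[OF potential_decrease])
  then show ?thesis by (rule LIMSEQ_imp_Suc)
qed

lemma residual_tendsto_zero: "residual \<longlonglongrightarrow> 0"
proof -
  define b where "b k = Ly * norm (dy (Suc k)) + (Ly + Lh) * norm (dy k)" for k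
  have dy: "(\<lambda>k. norm (dy k)) \<longlonglongrightarrow> 0"
    using tendsto_norm_zero[OF dy_tendsto_zero] .
  have "b \<longlonglongrightarrow> 0"
    using tendsto_add[OF tendsto_mult_right_zero[OF LIMSEQ_Suc[OF dy], of Ly]
        tendsto_mult_right_zero[OF dy, of "Ly + Lh"]]
    unfolding b_def by simp
  then have "(\<lambda>k. (b k)\<^sup>2) \<longlonglongrightarrow> 0"
    using tendsto_power[of b 0 sequentially 2] by simp
  then have lim: "(\<lambda>k. (b k)\<^sup>2 / (lamB * \<beta>\<^sup>2)) \<longlonglongrightarrow> 0"
    by (rule tendsto_divide_zero)
  have bound: "(norm (residual (Suc (Suc k))))\<^sup>2 \<le> (b k)\<^sup>2 / (lamB * \<beta>\<^sup>2)" for k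
  proof -
    have "(norm (residual (Suc (Suc k))))\<^sup>2 * (lamB * \<beta>\<^sup>2) \<le> (b k)\<^sup>2"
      using residual_bound[of k] unfolding b_def by (simp only: mult.commute)
    moreover have "0 < lamB * \<beta>\<^sup>2" using lamB_pos \<beta>_pos by simp
    ultimately show ?thesis by (simp add: pos_le_divide_eq)
  qed
  have "(\<lambda>k. residual (Suc (Suc k))) \<longlonglongrightarrow> 0"
    by (rule tendsto_zero_if_power2_norm_le[OF bound lim])
  then show ?thesis by (rule LIMSEQ_imp_Suc[OF LIMSEQ_imp_Suc])
qed

lemma xB_plus_y_tendsto_zero: "(\<lambda>k. xB k + y k) \<longlonglongrightarrow> 0"
proof -
  have "(\<lambda>k. (norm (residual k))\<^sup>2) \<longlonglongrightarrow> 0"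
    using tendsto_power[OF tendsto_norm_zero[OF residual_tendsto_zero], of 2] by simp
  then have lim: "(\<lambda>k. (norm (residual k))\<^sup>2 / lamB) \<longlonglongrightarrow> 0"
    by (rule tendsto_divide_zero)
  have bound: "(norm (xB k + y k))\<^sup>2 \<le> (norm (residual k))\<^sup>2 / lamB" for k
    using min_eigenvalue_gram_le[of B "xB k + y k"] lamB_pos
    unfolding lamB_def[symmetric] residual_eq by (simp add: pos_le_divide_eq mult.commute)
  show ?thesis
    by (rule tendsto_zero_if_power2_norm_le[OF bound lim])
qed

text \<open>Coercivity: along the feasible points \<open>(x (k+1), - xB (k+1))\<close> the objective stays below
  the decreasing potential.\<close>
lemma xB_bounded: "\<exists>R. \<forall>k. norm (xB (Suc k)) \<le> R"
proof (rule ccontr)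
  assume "\<not> ?thesis"
  then have "\<forall>n::nat. \<exists>k. real n < norm (xB (Suc k))"
    by (meson not_le)
  then obtain \<sigma> where \<sigma>: "\<And>n. real n < norm (xB (Suc (\<sigma> n)))"
    by metis
  define X where "X n = x (Suc (\<sigma> n))" for n
  define Y where "Y n = - xB (Suc (\<sigma> n))" for n
  have "filterlim (\<lambda>n. norm (Y n)) at_top sequentially"
    using \<sigma> unfolding Y_def
    by (intro filterlim_at_top_mono[OF filterlim_real_sequentially] always_eventually allI)
      (simp add: less_imp_le)
  moreover have "\<forall>n. A *v X n + B *v Y n = 0"
    unfolding X_def Y_def using feasible_xB by blast
  ultimately have "filterlim (\<lambda>n. g (X n) + f (X n) + h (Y n)) at_top sequentially"
    using coercive by blast
  then have "\<forall>\<^sub>F n in sequentially. potential 0 + 1 \<le> g (X n) + f (X n) + h (Y n)"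
    by (simp add: filterlim_at_top)
  then obtain N where "\<forall>n\<ge>N. potential 0 + 1 \<le> g (X n) + f (X n) + h (Y n)"
    unfolding eventually_sequentially by blast
  then have "potential 0 + 1 \<le> g (X N) + f (X N) + h (Y N)"
    by simp
  moreover have "g (X N) + f (X N) + h (Y N) \<le> potential (\<sigma> N)"
    unfolding X_def Y_def by (rule potential_lower_bound)
  moreover have "potential (\<sigma> N) \<le> potential 0"
    using potential_decseq by (simp add: decseq_def)
  ultimately show False by linarith
qed

lemma transpose_B_multiplier_bounded: "\<exists>M. \<forall>k. norm (transpose B *v \<gamma> (Suc (Suc k))) \<le> M"
proof -
  obtain R where R: "\<And>k. norm (xB (Suc k)) \<le> R"
    using xB_bounded by blast
  obtain Z where Z: "\<And>k. norm (xB k + y k) \<le> Z"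
    using BseqE[OF convergent_imp_Bseq[OF convergentI[OF xB_plus_y_tendsto_zero]]] by metis
  obtain D where D: "\<And>k. norm (dy k) \<le> D"
    using BseqE[OF convergent_imp_Bseq[OF convergentI[OF dy_tendsto_zero]]] by metis
  have "norm (transpose B *v \<gamma> (Suc (Suc k))) \<le> norm (gradh 0) + Lh * (Z + R) + Ly * D" for k
  proof -
    have "norm (y (Suc k)) \<le> Z + R"
      using Z[of "Suc k"] R[of k] norm_triangle_ineq4[of "xB (Suc k) + y (Suc k)" "xB (Suc k)"]
      by simp
    then have "norm (gradh (y (Suc k))) \<le> norm (gradh 0) + Lh * (Z + R)"
      using gradh_dist_le[of "y (Suc k)" 0] norm_triangle_ineq2[of "gradh (y (Suc k))" "gradh 0"]
        mult_left_mono[OF _ Lh_nonneg] by fastforce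
    moreover have "norm (Ly *\<^sub>R dy (Suc k)) \<le> Ly * D"
      using D[of "Suc k"] Ly_ge_3 by (simp add: mult_left_mono)
    ultimately show ?thesis
      using norm_triangle_ineq[of "gradh (y (Suc k))" "Ly *\<^sub>R dy (Suc k)"]
      unfolding multiplier_eq norm_minus_cancel by linarith
  qed
  then show ?thesis by blast
qed

lemma multiplier_residual_tendsto_zero: "(\<lambda>k. \<gamma> k \<bullet> residual k) \<longlonglongrightarrow> 0"
proof -
  obtain M where M: "\<And>k. norm (transpose B *v \<gamma> (Suc (Suc k))) \<le> M"
    using transpose_B_multiplier_bounded by blast
  have inner_eq: "\<gamma> k \<bullet> residual k = (transpose B *v \<gamma> k) \<bullet> (xB k + y k)" for k
    using inner_matrix_vector_transpose[of B "xB k + y k" "\<gamma> k"] by (simp add: residual_eq inner_commute)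
  have bound: "norm (\<gamma> (Suc (Suc k)) \<bullet> residual (Suc (Suc k))) \<le> M * norm (xB (Suc (Suc k)) + y (Suc (Suc k)))" for k
  proof -
    have "norm (\<gamma> (Suc (Suc k)) \<bullet> residual (Suc (Suc k)))
        \<le> norm (transpose B *v \<gamma> (Suc (Suc k))) * norm (xB (Suc (Suc k)) + y (Suc (Suc k)))"
      unfolding inner_eq real_norm_def by (rule Cauchy_Schwarz_ineq2)
    also have "\<dots> \<le> M * norm (xB (Suc (Suc k)) + y (Suc (Suc k)))"
      by (rule mult_right_mono[OF M norm_ge_zero])
    finally show ?thesis .
  qed
  have "(\<lambda>k. M * norm (xB (Suc (Suc k)) + y (Suc (Suc k)))) \<longlonglongrightarrow> 0"
    using tendsto_mult_right_zero[OF tendsto_norm_zero[OF LIMSEQ_Suc[OF LIMSEQ_Suc[OF xB_plus_y_tendsto_zero]]]] .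
  then have "(\<lambda>k. \<gamma> (Suc (Suc k)) \<bullet> residual (Suc (Suc k))) \<longlonglongrightarrow> 0"
    by (rule Lim_null_comparison[OF always_eventually[OF allI[OF bound]]])
  then show ?thesis by (rule LIMSEQ_imp_Suc[OF LIMSEQ_imp_Suc])
qed

lemma objective_convergent: "convergent objective"
proof -
  obtain L where L: "potential \<longlonglongrightarrow> L" by (rule potential_tendsto)
  have "objective (Suc k) = potential k - dy_weight * (norm (dy k))\<^sup>2
      - \<gamma> (Suc k) \<bullet> residual (Suc k) - \<beta>/2 * (norm (residual (Suc k)))\<^sup>2" for k
    by (simp add: potential_def lagrangian_def)
  moreover have "(\<lambda>k. potential k - dy_weight * (norm (dy k))\<^sup>2
      - \<gamma> (Suc k) \<bullet> residual (Suc k) - \<beta>/2 * (norm (residual (Suc k)))\<^sup>2)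
      \<longlonglongrightarrow> L - dy_weight * 0\<^sup>2 - 0 - \<beta>/2 * 0\<^sup>2"
    by (intro tendsto_intros L tendsto_norm_zero dy_tendsto_zero LIMSEQ_Suc
        multiplier_residual_tendsto_zero residual_tendsto_zero)
  ultimately have "(\<lambda>k. objective (Suc k)) \<longlonglongrightarrow> L" by simp
  then show ?thesis
    unfolding convergent_def using LIMSEQ_imp_Suc by blast
qed

end

theorem corollary2:
  fixes f g :: "real^'p \<Rightarrow> real"
    and h :: "real^'q \<Rightarrow> real"
    and gradg :: "real^'p \<Rightarrow> real^'p"
    and gradh :: "real^'q \<Rightarrow> real^'q"
    and A :: "real^'p^'n" and B :: "real^'q^'n"
    and Lg Lh Lx Ly \<beta> :: real
    and x :: "nat \<Rightarrow> real^'p" and y :: "nat \<Rightarrow> real^'q" and \<gamma> :: "nat \<Rightarrow> real^'n"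
  assumes h_grad: "\<And>v. (h has_derivative (\<lambda>d. gradh v \<bullet> d)) (at v)"
    and h_lip: "Lh-lipschitz_on UNIV gradh"
    and g_grad: "\<And>u. (g has_derivative (\<lambda>d. gradg u \<bullet> d)) (at u)"
    and g_lip: "Lg-lipschitz_on UNIV gradg"
    and lower_bdd: "\<exists>c. \<forall>u v. A *v u + B *v v = 0 \<longrightarrow> c \<le> g u + f u + h v"
    and coercive: "\<And>X Y. (\<forall>k. A *v X k + B *v Y k = 0) \<Longrightarrow>
                     filterlim (\<lambda>k. norm (Y k)) at_top sequentially \<Longrightarrow>
                     filterlim (\<lambda>k. g (X k) + f (X k) + h (Y k)) at_top sequentially"
    and B_rank: "rank B = CARD('q)"
    and im_AB: "range (\<lambda>u. A *v u) \<subseteq> range (\<lambda>v. B *v v)"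
    and pos: "Lx > 0" "Ly > 0" "\<beta> > 0"
    and x_step: "\<And>k u.
        f (x (Suc k)) + \<gamma> k \<bullet> (A *v x (Suc k)) + Lx / 2 * (norm (x (Suc k) - x k))\<^sup>2
          + (x (Suc k) - x k) \<bullet> (gradg (x k) + \<beta> *\<^sub>R (transpose A *v (A *v x k + B *v y k)))
        \<le> f u + \<gamma> k \<bullet> (A *v u) + Lx / 2 * (norm (u - x k))\<^sup>2
          + (u - x k) \<bullet> (gradg (x k) + \<beta> *\<^sub>R (transpose A *v (A *v x k + B *v y k)))"
    and y_step: "\<And>k v.
        \<gamma> k \<bullet> (B *v y (Suc k)) + Ly / 2 * (norm (y (Suc k) - y k))\<^sup>2
          + \<beta> / 2 * (norm (A *v x (Suc k) + B *v y (Suc k)))\<^sup>2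
          + (y (Suc k) - y k) \<bullet> gradh (y k)
        \<le> \<gamma> k \<bullet> (B *v v) + Ly / 2 * (norm (v - y k))\<^sup>2
          + \<beta> / 2 * (norm (A *v x (Suc k) + B *v v))\<^sup>2
          + (v - y k) \<bullet> gradh (y k)"
    and \<gamma>_step: "\<And>k. \<gamma> (Suc k) = \<gamma> k + \<beta> *\<^sub>R (A *v x (Suc k) + B *v y (Suc k))"
    and Lx_bd: "Lx \<ge> Lg + \<beta> * max_eigenvalue (transpose A ** A) + 6 * (Lg + Lh)\<^sup>2 + 1"
    and Ly_bd: "Ly \<ge> (Lg + Lh) + (Lg + Lh)\<^sup>2 + 3"
    and \<beta>_bd: "\<beta> \<ge> Max {((Lg + Lh) + Ly + 2) / min_eigenvalue (transpose B ** B),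
                        3 * ((Lg + Lh)\<^sup>2 + Ly\<^sup>2) / (min_eigenvalue (transpose B ** B) * ((Ly + (Lg + Lh)\<^sup>2) / 2)),
                        3 * Ly\<^sup>2 / min_eigenvalue (transpose B ** B)}"
  shows "convergent (\<lambda>k. g (x k) + f (x k) + h (y k))"
proof -
  define lam where "lam = min_eigenvalue (transpose B ** B)"
  have Lg0: "Lg \<ge> 0" and Lh0: "Lh \<ge> 0"
    using g_lip h_lip lipschitz_on_nonneg by blast+
  have "lam > 0"
    unfolding lam_def by (rule min_eigenvalue_gram_pos[OF B_rank])
  moreover have "3 * Ly\<^sup>2 / lam \<le> \<beta>"
    by (rule order_trans[OF Max_ge \<beta>_bd[folded lam_def]]) auto
  ultimately have \<beta>_ge: "3 * Ly\<^sup>2 \<le> \<beta> * min_eigenvalue (transpose B ** B)"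
    unfolding lam_def by (simp add: pos_divide_le_eq mult.commute)
  have Lx_ge: "Lg + \<beta> * max_eigenvalue (transpose A ** A) \<le> Lx"
    using Lx_bd zero_le_power2[of "Lg + Lh"] by linarith
  have "Lh\<^sup>2 \<le> (Lg + Lh)\<^sup>2"
    using Lg0 Lh0 by (intro power_mono) auto
  then have Ly_ge: "Lh + Lh\<^sup>2 + 3 \<le> Ly"
    using Ly_bd Lg0 by linarith
  interpret linearized_admm f g h gradg gradh A B Lg Lh Lx Ly \<beta> x y \<gamma>
    by unfold_locales (fact assms \<beta>_ge Lx_ge Ly_ge)+
  show ?thesis
    using objective_convergent unfolding objective_def[abs_def] .
qed

end
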